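(* Let $(\phi_t)$ be a parabolic semigroup of zero hyperbolic step in $\mathbb{H}$ with Denjoy--Wolff point $\infty$, and let its infinitesimal generator $G\colon\mathbb{H}\to\mathbb{H}\cup\mathbb{R}$ have Herglotz representation $G(z)=\alpha z+\beta+\int_{\mathbb{R}}\frac{1+sz}{s-z}\,d\mu(s)$ ($\alpha\ge0$, $\beta\in\mathbb{R}$, $\mu$ positive finite measure). The following are equivalent: (a) $(\phi_t)$ is of extremal rate; (b) $\limsup_{t\to+\infty}|\phi_t(z)|/\sqrt{t}<+\infty$ for some $z\in\mathbb{H}$ (equivalently, for all $z\in\mathbb{H}$); (c) $\alpha=0$, $\int_{\mathbb{R}}s^2\,d\mu(s)<+\infty$, and $\beta=\int_{\mathbb{R}}s\,d\mu(s)$. Moreover, if these hold, then for all $z\in\mathbb{H}$, $$\lim_{t\to+\infty}\frac{\phi_t(z)}{\sqrt t}=i\sqrt{2\int_{\mathbb{R}}(1+s^2)\,d\mu(s)}.$$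
   Context: $\mathbb{H}$ is the upper half-plane. A semigroup in $\mathbb{H}$ is a family $(\phi_t)_{t\ge0}$ of holomorphic self-maps of $\mathbb{H}$ with $\phi_0=\mathrm{id}$, $\phi_{t+s}=\phi_t\circ\phi_s$, and $\phi_t\to\mathrm{id}$ pointwise as $t\to0^+$. Non-elliptic: no $z\in\mathbb{H}$, $t>0$ with $\phi_t(z)=z$; then all orbits converge to a common boundary point (the Denjoy--Wolff point). With Denjoy--Wolff point $\infty$: parabolic means $\angle\lim_{z\to\infty}\phi_t(z)/z=1$ for all $t$. Zero hyperbolic step means $\lim_{t\to+\infty}d_{\mathbb{H}}(\phi_{t+1}(z),\phi_t(z))=0$ for some (equivalently all) $z$, where $d_{\mathbb{H}}$ is the hyperbolic distance $d_{\mathbb{H}}(z,w)=\frac12\log\frac{1+\rho}{1-\rho}$, $\rho=|z-w|/|z-\bar w|$. Such a semigroup is of extremal rate if there is $L\in(0,+\infty)$ with $\lim_{t\to+\infty}|\phi_t(z)|/\sqrt t=L$ for all $z\in\mathbb{H}$. The infinitesimal generator $G$ satisfies $\partial_t\phi_t(z)=G(\phi_t(z))$. *)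

theory Defs
  imports "HOL-Analysis.Analysis" "HOL-Library.Liminf_Limsup"
begin

definition UHP :: "complex set" where
  "UHP = {z. Im z > 0}"

definition hdist_H :: "complex \<Rightarrow> complex \<Rightarrow> real" where
  "hdist_H z w = (let \<rho> = cmod (z - w) / cmod (z - cnj w) in (1/2) * ln ((1 + \<rho>) / (1 - \<rho>)))"

definition semigroup_H :: "(real \<Rightarrow> complex \<Rightarrow> complex) \<Rightarrow> bool" where
  "semigroup_H \<phi> \<longleftrightarrow>
     (\<forall>t\<ge>0. \<phi> t holomorphic_on UHP \<and> \<phi> t ` UHP \<subseteq> UHP) \<and>
     (\<forall>z\<in>UHP. \<phi> 0 z = z) \<and>
     (\<forall>t\<ge>0. \<forall>s\<ge>0. \<forall>z\<in>UHP. \<phi> (t + s) z = \<phi> t (\<phi> s z)) \<and>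
     (\<forall>z\<in>UHP. ((\<lambda>t. \<phi> t z) \<longlongrightarrow> z) (at_right 0))"

definition non_elliptic :: "(real \<Rightarrow> complex \<Rightarrow> complex) \<Rightarrow> bool" where
  "non_elliptic \<phi> \<longleftrightarrow> \<not> (\<exists>z\<in>UHP. \<exists>t>0. \<phi> t z = z)"

definition DW_infinity :: "(real \<Rightarrow> complex \<Rightarrow> complex) \<Rightarrow> bool" where
  "DW_infinity \<phi> \<longleftrightarrow> (\<forall>z\<in>UHP. filterlim (\<lambda>t. \<phi> t z) at_infinity at_top)"

definition angular_lim_infty :: "(complex \<Rightarrow> complex) \<Rightarrow> complex \<Rightarrow> bool" where
  "angular_lim_infty f L \<longleftrightarrow>
     (\<forall>M>0. (f \<longlongrightarrow> L) (inf at_infinity (principal {z. Im z > 0 \<and> \<bar>Re z\<bar> \<le> M * Im z})))"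

definition parabolic_semigroup :: "(real \<Rightarrow> complex \<Rightarrow> complex) \<Rightarrow> bool" where
  "parabolic_semigroup \<phi> \<longleftrightarrow> (\<forall>t\<ge>0. angular_lim_infty (\<lambda>z. \<phi> t z / z) 1)"

definition zero_hyperbolic_step :: "(real \<Rightarrow> complex \<Rightarrow> complex) \<Rightarrow> bool" where
  "zero_hyperbolic_step \<phi> \<longleftrightarrow>
     (\<exists>z\<in>UHP. ((\<lambda>t. hdist_H (\<phi> (t + 1) z) (\<phi> t z)) \<longlongrightarrow> 0) at_top)"

definition extremal_rate :: "(real \<Rightarrow> complex \<Rightarrow> complex) \<Rightarrow> bool" where
  "extremal_rate \<phi> \<longleftrightarrow>
     (\<exists>L>0. \<forall>z\<in>UHP. ((\<lambda>t. cmod (\<phi> t z) / sqrt t) \<longlongrightarrow> L) at_top)"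

definition infinitesimal_generator ::
  "(real \<Rightarrow> complex \<Rightarrow> complex) \<Rightarrow> (complex \<Rightarrow> complex) \<Rightarrow> bool" where
  "infinitesimal_generator \<phi> G \<longleftrightarrow>
     (\<forall>z\<in>UHP. \<forall>t\<ge>0. ((\<lambda>s. \<phi> s z) has_vector_derivative G (\<phi> t z)) (at t within {0..}))"

end

theory Submission
  imports Defs "HOL-Real_Asymp.Real_Asymp"
begin

text \<open>
  Write \<nu> = (1 + s^2) \<mu>, so that trunc_mass R below is \<nu>([-R, R]) and total_mass is
  \<nu>(\<real>) = \<integral> (1 + s^2) d\<mu>. An orbit w(t) = \<phi>_t(z) stays in H, tends to \<infinity> and
  solves w' = G(w); nothing else about the semigroup is used.

  If |w(t)| \<le> C \<surd>t, integrate (log Im w)' = Im G(w) / Im w \<ge> \<alpha> + \<nu>([-R, R]) / (R + |w|)^2: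
  comparing with log Im w \<le> log C + (log t) / 2 forces \<alpha> = 0 and \<nu>([-R, R]) \<le> C^2 / 2 for
  all R, so \<mu> has a finite second moment. Then G(w) tends to the constant \<beta> - \<integral> s d\<mu>, which
  by L'Hopital is also the limit of w(t) / t; the latter is 0 by the growth bound.

  Conversely, under these conditions G(z) = \<integral> (1 + s^2) / (s - z) d\<mu>, whence
  w G(w) = \<integral> s (1 + s^2) / (s - w) d\<mu> - \<nu>(\<real>). The ratio Im^2 w / |w|^2 cannot decrease while
  it is below 1/4 and |w| is large, so the orbit eventually stays in a sector Im w \<ge> c |w|,
  where |s| \<le> (2 + 2/c) |s - w|. Dominated convergence then gives w G(w) \<rightarrow> -\<nu>(\<real>), i.e.
  (w^2)' \<rightarrow> -2 \<nu>(\<real>), so w^2 / t \<rightarrow> -2 \<nu>(\<real>) and, since Im w > 0, w / \<surd>t \<rightarrow> i \<surd>(2 \<nu>(\<real>)).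
\<close>

lemma ge_min_if_DERIV_nonneg_below:
  fixes f :: "real \<Rightarrow> real"
  assumes ab: "a \<le> b" and cont: "continuous_on {a..b} f"
    and der: "\<And>x. a < x \<Longrightarrow> x < b \<Longrightarrow> f x < c \<Longrightarrow> \<exists>y. DERIV f x :> y \<and> y \<ge> 0"
    and dif: "\<And>x. a < x \<Longrightarrow> x < b \<Longrightarrow> f differentiable (at x)"
  shows "f b \<ge> min (f a) c"
proof (rule ccontr)
  define m where "m = min (f a) c"
  assume "\<not> f b \<ge> min (f a) c"
  hence fb: "f b < m" unfolding m_def by linarith
  \<comment> \<open>apply the mean value theorem between the last time s with f s \<ge> m and b\<close>
  define S where "S = {a..b} \<inter> f -` {m..}"
  have "closed S" unfolding S_def
    by (rule continuous_closed_preimage[OF cont]) auto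
  moreover have aS: "a \<in> S" using ab by (auto simp: S_def m_def)
  moreover have bdd: "bdd_above S" by (auto simp: S_def bdd_above_def)
  ultimately have sS: "Sup S \<in> S" using closed_contains_Sup by blast
  define s where "s = Sup S"
  have s: "a \<le> s" "s \<le> b" "f s \<ge> m" using sS by (auto simp: S_def s_def)
  with fb have sb: "s < b" by (cases "s = b") auto
  have "continuous_on {s..b} f" using cont by (rule continuous_on_subset) (use s in auto)
  then obtain l x where x: "s < x" "x < b" "DERIV f x :> l" "f b - f s = (b - s) * l"
    using MVT[OF sb] dif s(1) by (meson le_less_trans)
  have "x \<notin> S" using cSup_upper[OF _ bdd, of x] x(1) by (auto simp: s_def)
  hence "f x < c" using x s(1) by (auto simp: S_def m_def)
  then obtain y where y: "DERIV f x :> y" "y \<ge> 0" using der[of x] x s(1) by auto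
  have "l = y" using DERIV_unique[OF x(3) y(1)] .
  hence "(b - s) * l \<ge> 0" using sb y(2) by simp
  hence "f b \<ge> f s" using x(4) by linarith
  thus False using fb s(3) by simp
qed

lemma lhospital_at_top_divide_ident:
  fixes f f' :: "real \<Rightarrow> complex"
  assumes f': "eventually (\<lambda>t. (f has_vector_derivative f' t) (at t)) at_top"
    and lim: "(f' \<longlongrightarrow> L) at_top"
  shows "((\<lambda>t. f t / of_real t) \<longlongrightarrow> L) at_top"
proof -
  have real: "((\<lambda>t. g t / t) \<longlongrightarrow> l) at_top"
    if g': "eventually (\<lambda>t. DERIV g t :> g' t) at_top" "(g' \<longlongrightarrow> l) at_top"
    for g g' :: "real \<Rightarrow> real" and l
  proof (rule lhospital_at_top_at_top[where g'="\<lambda>_. 1"])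
    show "filterlim (\<lambda>x. x) at_top at_top" by (rule filterlim_ident)
    show "\<forall>\<^sub>F x in at_top. ((\<lambda>x. x) has_real_derivative 1) (at x)"
      by (simp add: DERIV_ident)
    show "((\<lambda>x. g' x / 1) \<longlongrightarrow> l) at_top" using g'(2) by simp
  qed (use g' in auto)
  have "((\<lambda>t. Re (f t) / t) \<longlongrightarrow> Re L) at_top"
    using f' by (intro real[where g'="\<lambda>t. Re (f' t)"] tendsto_Re lim)
                (auto elim!: eventually_mono intro: has_field_derivative_Re)
  moreover have "((\<lambda>t. Im (f t) / t) \<longlongrightarrow> Im L) at_top"
    using f' by (intro real[where g'="\<lambda>t. Im (f' t)"] tendsto_Im lim)
                (auto elim!: eventually_mono intro: has_field_derivative_Im)
  ultimately show ?thesis by (simp add: tendsto_complex_iff Re_divide_of_real Im_divide_of_real)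
qed

lemma linear_plus_ln_bounded_above_imp:
  fixes a b K :: real
  assumes bounded: "eventually (\<lambda>t. a * t + b * ln t \<le> K) at_top" and a: "a \<ge> 0"
  shows "a = 0 \<and> b \<le> 0"
proof (rule ccontr)
  assume "\<not> (a = 0 \<and> b \<le> 0)"
  hence "a > 0 \<or> (a = 0 \<and> b > 0)" using a by auto
  hence "filterlim (\<lambda>t. a * t + b * ln t) at_top at_top"
    by (elim disjE conjE) real_asymp+
  hence "eventually (\<lambda>t. a * t + b * ln t > K) at_top"
    by (simp add: filterlim_at_top_dense)
  with bounded have "eventually (\<lambda>t::real. False) at_top" by eventually_elim auto
  thus False by simp
qed

lemma antiderivative_inverse_square_affine_sqrt:
  fixes C R t :: real
  assumes C: "C > 0" and R: "R \<ge> 0" and t: "t > 0"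
  shows "((\<lambda>t. 2 / C^2 * (ln (R + C * sqrt t) + R / (R + C * sqrt t)))
          has_real_derivative 1 / (R + C * sqrt t)^2) (at t)"
proof -
  define q where "q = sqrt t"
  have q: "q > 0" using t by (simp add: q_def)
  have p: "R + C * q > 0" using C R q by (simp add: add_nonneg_pos)
  have g: "((\<lambda>t. R + C * sqrt t) has_real_derivative C * (inverse q / 2)) (at t)"
    using DERIV_add[OF DERIV_const DERIV_cmult[OF DERIV_real_sqrt[OF t], of C]] by (simp add: q_def)
  have ln: "((\<lambda>t. ln (R + C * sqrt t)) has_real_derivative C * (inverse q / 2) / (R + C * q)) (at t)"
    using DERIV_chain2[OF DERIV_ln_divide[OF p[unfolded q_def]] g] by (simp add: q_def mult.commute)
  have quotient: "((\<lambda>t. R / (R + C * sqrt t)) has_real_derivative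
      - (R * (C * (inverse q / 2)) / (R + C * q)^2)) (at t)"
    using DERIV_divide[OF DERIV_const g, of R] p by (simp add: q_def power2_eq_square)
  have "((\<lambda>t. 2 / C^2 * (ln (R + C * sqrt t) + R / (R + C * sqrt t))) has_real_derivative
      2 / C^2 * (C * (inverse q / 2) / (R + C * q) - R * (C * (inverse q / 2)) / (R + C * q)^2)) (at t)"
    using DERIV_cmult[OF DERIV_add[OF ln quotient], of "2 / C^2"] by simp
  moreover have "2 / C^2 * (C * (inverse q / 2) / (R + C * q) - R * (C * (inverse q / 2)) / (R + C * q)^2)
      = 2 / C^2 * (C * (inverse q / 2)) * ((R + C * q) - R) / (R + C * q)^2"
    using p q by (simp add: divide_simps power2_eq_square) (simp add: algebra_simps)
  moreover have "\<dots> = 1 / (R + C * q)^2" using q C by (simp add: field_simps power2_eq_square)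
  ultimately show ?thesis by (simp add: q_def)
qed

lemma tendsto_inverse_diff_0:
  fixes w :: "'a \<Rightarrow> 'b::real_normed_field"
  assumes "filterlim w at_infinity F"
  shows "((\<lambda>x. inverse (c - w x)) \<longlongrightarrow> 0) F"
proof -
  have "filterlim (\<lambda>x. w x + - c) at_infinity F"
    using assms by (rule tendsto_add_filterlim_at_infinity'[OF _ tendsto_const])
  hence "((\<lambda>x. - inverse (w x - c)) \<longlongrightarrow> - 0) F"
    by (intro tendsto_minus) (simp add: filterlim_compose[OF tendsto_inverse_0])
  thus ?thesis by (simp flip: inverse_minus_eq)
qed

lemma tendsto_i_mult_if_square_tendsto:
  fixes v :: "'a \<Rightarrow> complex"
  assumes sq: "((\<lambda>x. v x ^ 2) \<longlongrightarrow> - (of_real a ^ 2)) F" and a: "a > 0"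
    and Im_pos: "eventually (\<lambda>x. Im (v x) > 0) F"
  shows "(v \<longlongrightarrow> \<i> * of_real a) F"
proof -
  have "((\<lambda>x. v x - \<i> * of_real a) \<longlongrightarrow> 0) F"
  proof (rule Lim_null_comparison)
    show "((\<lambda>x. cmod (v x ^ 2 + of_real a ^ 2) / a) \<longlongrightarrow> 0) F"
      using tendsto_divide[OF tendsto_norm_zero[OF LIM_zero[OF sq]] tendsto_const, of a] a by simp
    show "eventually (\<lambda>x. norm (v x - \<i> * of_real a) \<le> cmod (v x ^ 2 + of_real a ^ 2) / a) F"
      using Im_pos
    proof eventually_elim
      case (elim x)
      have "a \<le> cmod (v x + \<i> * of_real a)"
        using elim abs_Im_le_cmod[of "v x + \<i> * of_real a"] by simp
      hence "cmod (v x - \<i> * of_real a) * a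
          \<le> cmod (v x - \<i> * of_real a) * cmod (v x + \<i> * of_real a)"
        by (intro mult_left_mono) auto
      also have "\<dots> = cmod (v x ^ 2 + of_real a ^ 2)"
        by (simp flip: norm_mult add: power2_eq_square algebra_simps)
      finally show ?case using a by (simp add: field_simps)
    qed
  qed
  thus ?thesis by (rule LIM_zero_cancel)
qed

lemma abs_le_dist_if_in_sector:
  fixes z :: complex and c s :: real
  assumes c: "c > 0" and sector: "c * cmod z \<le> Im z"
  shows "\<bar>s\<bar> \<le> (2 + 2 / c) * cmod (of_real s - z)"
proof -
  define d where "d = cmod (of_real s - z)"
  have d: "d \<ge> 0" by (simp add: d_def)
  have far: "\<bar>s\<bar> - cmod z \<le> d"
    using norm_triangle_ineq[of "of_real s - z" z] by (simp add: d_def)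
  have "Im z \<le> d" using abs_Im_le_cmod[of "of_real s - z"] by (simp add: d_def)
  hence near: "c * cmod z \<le> d" using sector by linarith
  show ?thesis
  proof (cases "\<bar>s\<bar> \<le> 2 * cmod z")
    case True
    have "2 * cmod z \<le> 2 / c * d" using near c by (simp add: field_simps)
    thus ?thesis using True d c by (simp add: d_def[symmetric] distrib_right)
  next
    case False
    hence "\<bar>s\<bar> \<le> 2 * d" using far by linarith
    moreover have "0 \<le> 2 / c * d" using d c by simp
    ultimately show ?thesis by (simp add: d_def[symmetric] distrib_right)
  qed
qed

section \<open>Herglotz generators\<close>

locale herglotz_generator = finite_measure \<mu> for \<mu> :: "real measure" +
  fixes \<alpha> \<beta> :: real and G :: "complex \<Rightarrow> complex"
  assumes sets_eq_borel: "sets \<mu> = sets borel"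
    and alpha_nonneg: "\<alpha> \<ge> 0"
    and G_eq: "\<And>z. Im z > 0 \<Longrightarrow> G z = of_real \<alpha> * z + of_real \<beta>
                     + (\<integral>s. (1 + of_real s * z) / (of_real s - z) \<partial>\<mu>)"
begin

lemma borel_measurable_mu: "f \<in> borel_measurable borel \<Longrightarrow> f \<in> borel_measurable \<mu>"
  unfolding measurable_cong_sets[OF sets_eq_borel refl] .

lemma integrable_herglotz_kernel:
  assumes z: "Im z > 0"
  shows "integrable \<mu> (\<lambda>s. (1 + of_real s * z) / (of_real s - z))"
proof (rule integrable_const_bound[where B="cmod z + cmod (1 + z^2) / Im z"])
  show "AE s in \<mu>. norm ((1 + of_real s * z) / (of_real s - z)) \<le> cmod z + cmod (1 + z^2) / Im z"
  proof (rule AE_I2)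
    fix s :: real
    have "of_real s - z \<noteq> 0" using z by (auto simp: complex_eq_iff)
    hence split: "(1 + of_real s * z) / (of_real s - z) = z + (1 + z^2) / (of_real s - z)"
      by (simp add: field_simps power2_eq_square)
    have "Im z \<le> cmod (of_real s - z)"
      using abs_Im_le_cmod[of "of_real s - z"] by simp
    hence "cmod ((1 + z^2) / (of_real s - z)) \<le> cmod (1 + z^2) / Im z"
      using z by (simp add: norm_divide frac_le)
    thus "norm ((1 + of_real s * z) / (of_real s - z)) \<le> cmod z + cmod (1 + z^2) / Im z"
      unfolding split by (meson norm_triangle_ineq order_trans add_left_mono)
  qed
qed (rule borel_measurable_mu, measurable)

lemma Im_herglotz_kernel:
  "Im ((1 + of_real s * z) / (of_real s - z)) = (1 + s^2) * Im z / ((s - Re z)^2 + (Im z)^2)"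
  by (simp add: Im_divide power2_eq_square algebra_simps)

lemma integrable_Im_herglotz_kernel:
  assumes "Im z > 0"
  shows "integrable \<mu> (\<lambda>s. (1 + s^2) * Im z / ((s - Re z)^2 + (Im z)^2))"
  using integrable_Im[OF integrable_herglotz_kernel[OF assms]] by (simp add: Im_herglotz_kernel)

lemma Im_G_eq:
  assumes z: "Im z > 0"
  shows "Im (G z) = \<alpha> * Im z + (\<integral>s. (1 + s^2) * Im z / ((s - Re z)^2 + (Im z)^2) \<partial>\<mu>)"
proof -
  have "Im (\<integral>s. (1 + of_real s * z) / (of_real s - z) \<partial>\<mu>)
     = (\<integral>s. Im ((1 + of_real s * z) / (of_real s - z)) \<partial>\<mu>)"
    using integrable_herglotz_kernel[OF z] by (rule integral_Im[symmetric])
  thus ?thesis using G_eq[OF z] by (simp add: Im_herglotz_kernel)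
qed

lemma Im_G_nonneg:
  assumes "Im z > 0"
  shows "Im (G z) \<ge> 0"
  unfolding Im_G_eq[OF assms] using alpha_nonneg assms
  by (intro add_nonneg_nonneg integral_nonneg_AE) (auto intro!: AE_I2 divide_nonneg_nonneg)

definition trunc_mass :: "real \<Rightarrow> real" where
  "trunc_mass R = (\<integral>s. indicator {-R..R} s * (1 + s^2) \<partial>\<mu>)"

lemma integrable_trunc_weight: "integrable \<mu> (\<lambda>s. indicator {-R..R} s * (1 + s^2))"
proof (rule integrable_const_bound[where B="1 + R^2"])
  show "AE s in \<mu>. norm (indicator {-R..R} s * (1 + s^2)) \<le> 1 + R^2"
  proof (rule AE_I2)
    fix s :: real
    show "norm (indicator {-R..R} s * (1 + s^2)) \<le> 1 + R^2"
    proof (cases "s \<in> {-R..R}")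
      case True
      hence "s^2 \<le> R^2" by (auto intro!: power2_le_iff_abs_le[THEN iffD2] simp: abs_le_iff)
      thus ?thesis using True by (simp add: abs_of_nonneg add_nonneg_nonneg)
    qed (simp add: add_nonneg_nonneg)
  qed
qed (rule borel_measurable_mu, measurable)

lemma trunc_mass_nonneg: "trunc_mass R \<ge> 0"
  unfolding trunc_mass_def by (rule integral_nonneg_AE) (auto intro!: AE_I2 simp: indicator_def)

lemma trunc_mass_mono: "R \<le> R' \<Longrightarrow> trunc_mass R \<le> trunc_mass R'"
  unfolding trunc_mass_def
  by (intro integral_mono integrable_trunc_weight) (auto simp: indicator_def add_nonneg_nonneg)

lemma Im_G_ge_trunc_mass:
  assumes z: "Im z > 0" and R: "R \<ge> 0"
  shows "Im (G z) \<ge> \<alpha> * Im z + Im z * trunc_mass R / (R + cmod z)^2"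
proof -
  let ?c = "Im z / (R + cmod z)^2"
  have "z \<noteq> 0" using z by auto
  hence pos: "R + cmod z > 0" using R by (simp add: add_nonneg_pos)
  have "(\<integral>s. indicator {-R..R} s * (1 + s^2) * ?c \<partial>\<mu>)
        \<le> (\<integral>s. (1 + s^2) * Im z / ((s - Re z)^2 + (Im z)^2) \<partial>\<mu>)"
  proof (rule integral_mono)
    show "integrable \<mu> (\<lambda>s. indicator {-R..R} s * (1 + s^2) * ?c)"
      using integrable_trunc_weight by (rule integrable_mult_left)
    show "integrable \<mu> (\<lambda>s. (1 + s^2) * Im z / ((s - Re z)^2 + (Im z)^2))"
      using integrable_Im_herglotz_kernel[OF z] .
    fix s :: real
    show "indicator {-R..R} s * (1 + s^2) * ?c \<le> (1 + s^2) * Im z / ((s - Re z)^2 + (Im z)^2)"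
    proof (cases "s \<in> {-R..R}")
      case True
      have "cmod (of_real s - z) \<le> R + cmod z"
        using norm_triangle_ineq4[of "of_real s" z] True by auto
      hence "(cmod (of_real s - z))^2 \<le> (R + cmod z)^2" by (simp add: power_mono)
      moreover have "(cmod (of_real s - z))^2 = (s - Re z)^2 + (Im z)^2"
        using cmod_power2[of "of_real s - z"] by (simp add: power2_eq_square algebra_simps)
      moreover have "(s - Re z)^2 + (Im z)^2 > 0" using z by (simp add: add_nonneg_pos)
      ultimately have "?c \<le> Im z / ((s - Re z)^2 + (Im z)^2)"
        using z pos by (intro divide_left_mono) auto
      hence "(1 + s^2) * ?c \<le> (1 + s^2) * (Im z / ((s - Re z)^2 + (Im z)^2))"
        by (intro mult_left_mono) (auto simp: add_nonneg_nonneg)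
      thus ?thesis using True by simp
    qed (use z in \<open>simp add: divide_nonneg_nonneg add_nonneg_nonneg\<close>)
  qed
  also have "(\<integral>s. indicator {-R..R} s * (1 + s^2) * ?c \<partial>\<mu>) = trunc_mass R * ?c"
    unfolding trunc_mass_def by (rule integral_mult_left_zero)
  finally show ?thesis unfolding Im_G_eq[OF z] by (simp add: mult.commute)
qed

lemma nn_integral_square_finite_if_trunc_mass_bounded:
  assumes B: "\<And>R. R \<ge> 0 \<Longrightarrow> trunc_mass R \<le> B"
  shows "(\<integral>\<^sup>+ s. ennreal (s^2) \<partial>\<mu>) < \<infinity>"
proof -
  define f where "f n s = ennreal (indicator {- real n..real n} s * s^2)" for n :: nat and s :: real
  have "incseq f"
    unfolding f_def by (auto simp: incseq_def le_fun_def indicator_def intro!: ennreal_leI)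
  moreover have "f n \<in> borel_measurable \<mu>" for n
    unfolding f_def by (rule borel_measurable_mu) measurable
  moreover have "(\<lambda>n. f n s) \<longlonglongrightarrow> ennreal (s^2)" for s
  proof (rule tendsto_eventually)
    obtain N :: nat where "\<bar>s\<bar> \<le> real N" using real_arch_simple by blast
    thus "eventually (\<lambda>n. f n s = ennreal (s^2)) sequentially"
      unfolding eventually_sequentially f_def
      by (intro exI[of _ N]) (auto simp: indicator_def abs_le_iff)
  qed
  ultimately have lim: "(\<lambda>n. integral\<^sup>N \<mu> (f n)) \<longlonglongrightarrow> (\<integral>\<^sup>+ s. ennreal (s^2) \<partial>\<mu>)"
    by (rule nn_integral_LIMSEQ)
  have "integral\<^sup>N \<mu> (f n) \<le> ennreal B" for n
  proof -
    have "integral\<^sup>N \<mu> (f n) \<le> (\<integral>\<^sup>+ s. ennreal (indicator {- real n..real n} s * (1 + s^2)) \<partial>\<mu>)"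
      unfolding f_def by (intro nn_integral_mono ennreal_leI) (auto simp: indicator_def)
    also have "\<dots> = ennreal (trunc_mass (real n))"
      unfolding trunc_mass_def
      by (intro nn_integral_eq_integral integrable_trunc_weight)
         (auto intro!: AE_I2 simp: indicator_def add_nonneg_nonneg)
    also have "\<dots> \<le> ennreal B" using B[of "real n"] by (intro ennreal_leI) simp
    finally show ?thesis .
  qed
  hence "(\<integral>\<^sup>+ s. ennreal (s^2) \<partial>\<mu>) \<le> ennreal B"
    by (intro LIMSEQ_le_const2[OF lim]) auto
  thus ?thesis by (simp add: le_less_trans)
qed

lemma integrable_square_if_nn_integral_finite:
  "(\<integral>\<^sup>+ s. ennreal (s^2) \<partial>\<mu>) < \<infinity> \<Longrightarrow> integrable \<mu> (\<lambda>s. s^2)"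
  by (rule integrableI_bounded) (auto intro: borel_measurable_mu)

end

locale herglotz_generator_finite_moment = herglotz_generator +
  assumes integrable_square: "integrable \<mu> (\<lambda>s. s^2)"
begin

lemma integrable_weight: "integrable \<mu> (\<lambda>s. 1 + s^2)"
  using integrable_square by simp

lemma integrable_ident: "integrable \<mu> (\<lambda>s. s)"
proof (rule Bochner_Integration.integrable_bound[OF integrable_weight])
  show "(\<lambda>s. s) \<in> borel_measurable \<mu>" by (rule borel_measurable_mu) measurable
  show "AE s in \<mu>. norm s \<le> norm (1 + s^2)"
  proof (rule AE_I2)
    fix s :: real
    have "\<bar>s\<bar> \<le> 1 + s^2"
    proof (cases "\<bar>s\<bar> \<le> 1")
      case False
      hence "\<bar>s\<bar> * 1 \<le> \<bar>s\<bar> * \<bar>s\<bar>" by (intro mult_left_mono) auto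
      thus ?thesis by (simp add: power2_eq_square)
    qed (simp add: add_increasing2)
    thus "norm s \<le> norm (1 + s^2)" by simp
  qed
qed

definition total_mass :: real where
  "total_mass = (\<integral>s. 1 + s^2 \<partial>\<mu>)"

definition drift :: real where
  "drift = \<beta> - (\<integral>s. s \<partial>\<mu>)"

lemma total_mass_nonneg: "total_mass \<ge> 0"
  unfolding total_mass_def by (rule integral_nonneg_AE) (auto intro!: AE_I2 add_nonneg_nonneg)

lemma norm_cauchy_kernel_le:
  assumes "Im z > 0"
  shows "cmod (of_real (1 + s^2) / (of_real s - z)) \<le> (1 + s^2) / Im z"
proof -
  have "Im z \<le> cmod (of_real s - z)"
    using abs_Im_le_cmod[of "of_real s - z"] by simp
  moreover have "cmod (of_real (1 + s^2) :: complex) = 1 + s^2"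
    by (simp only: norm_of_real) (simp add: add_nonneg_nonneg)
  ultimately show ?thesis using assms unfolding norm_divide
    by (metis divide_left_mono add_nonneg_nonneg zero_le_one zero_le_power2 mult_pos_pos
        order_less_le_trans)
qed

lemma integrable_cauchy_kernel:
  assumes "Im z > 0"
  shows "integrable \<mu> (\<lambda>s. of_real (1 + s^2) / (of_real s - z))"
proof (rule Bochner_Integration.integrable_bound)
  show "integrable \<mu> (\<lambda>s. (1 + s^2) / Im z)" using integrable_weight by (rule integrable_divide)
  show "AE s in \<mu>. norm (of_real (1 + s^2) / (of_real s - z)) \<le> norm ((1 + s^2) / Im z)"
    using norm_cauchy_kernel_le[OF assms] assms
    by (intro AE_I2) (simp add: abs_of_nonneg add_nonneg_nonneg)
qed (rule borel_measurable_mu, measurable)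

lemma G_eq_cauchy_integral:
  assumes z: "Im z > 0"
  shows "G z = of_real \<alpha> * z + of_real drift + (\<integral>s. of_real (1 + s^2) / (of_real s - z) \<partial>\<mu>)"
proof -
  have "of_real s - z \<noteq> 0" for s using z by (auto simp: complex_eq_iff)
  hence kernel: "(1 + of_real s * z) / (of_real s - z)
      = of_real (1 + s^2) / (of_real s - z) - of_real s" for s
    by (simp add: field_simps power2_eq_square)
  have "(\<integral>s. (1 + of_real s * z) / (of_real s - z) \<partial>\<mu>)
      = (\<integral>s. of_real (1 + s^2) / (of_real s - z) \<partial>\<mu>) - (\<integral>s. of_real s \<partial>\<mu>)"
    unfolding kernel using integrable_cauchy_kernel[OF z] integrable_ident
    by (intro Bochner_Integration.integral_diff) auto
  thus ?thesis unfolding G_eq[OF z] drift_def by simp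
qed

lemma cauchy_integral_tendsto_0:
  fixes z :: "real \<Rightarrow> complex"
  assumes infinity: "filterlim z at_infinity at_top"
    and Im_ge: "eventually (\<lambda>t. Im (z t) \<ge> y0) at_top" and y0: "y0 > 0"
  shows "((\<lambda>t. \<integral>s. of_real (1 + s^2) / (of_real s - z t) \<partial>\<mu>) \<longlongrightarrow> 0) at_top"
proof -
  have "((\<lambda>t. \<integral>s. of_real (1 + s^2) / (of_real s - z t) \<partial>\<mu>) \<longlongrightarrow> (\<integral>s. 0 \<partial>\<mu>)) at_top"
  proof (rule integral_dominated_convergence_at_top[where w="\<lambda>s. (1 + s^2) / y0"])
    show "(\<lambda>s. of_real (1 + s^2) / (of_real s - z t)) \<in> borel_measurable \<mu>" for t
      by (rule borel_measurable_mu) measurable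
    show "integrable \<mu> (\<lambda>s. (1 + s^2) / y0)" using integrable_weight by (rule integrable_divide)
    show "AE s in \<mu>. ((\<lambda>t. of_real (1 + s^2) / (of_real s - z t)) \<longlongrightarrow> 0) at_top"
      using tendsto_mult[OF tendsto_const tendsto_inverse_diff_0[OF infinity]]
      by (intro AE_I2) (simp add: divide_inverse)
    show "\<forall>\<^sub>F t in at_top. AE s in \<mu>. norm (of_real (1 + s^2) / (of_real s - z t)) \<le> (1 + s^2) / y0"
      using Im_ge
    proof eventually_elim
      case (elim t)
      have "(1 + s^2) / Im (z t) \<le> (1 + s^2) / y0" for s
        using elim y0 by (intro divide_left_mono) (auto simp: add_nonneg_nonneg)
      thus ?case using norm_cauchy_kernel_le[of "z t"] elim y0 by (intro AE_I2) (smt (verit))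
    qed
  qed simp
  thus ?thesis by simp
qed

lemma integral_trunc_weight_combination:
  shows integrable_trunc_weight_combination: "integrable \<mu> (\<lambda>s. indicator {-a..a} s * (1 + s^2) * c
      - 2 * ((1 + s^2) - indicator {-b..b} s * (1 + s^2)))"
    and "(\<integral>s. indicator {-a..a} s * (1 + s^2) * c - 2 * ((1 + s^2) - indicator {-b..b} s * (1 + s^2)) \<partial>\<mu>)
      = c * trunc_mass a - 2 * (total_mass - trunc_mass b)"
proof -
  let ?A = "\<lambda>s. indicator {-a..a} s * (1 + s^2) * c"
  let ?B = "\<lambda>s. (1 + s^2) - indicator {-b..b} s * (1 + (s::real)^2)"
  have A: "integrable \<mu> ?A" by (intro integrable_mult_left integrable_trunc_weight)
  have B: "integrable \<mu> ?B"
    by (intro Bochner_Integration.integrable_diff integrable_trunc_weight integrable_weight)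
  show "integrable \<mu> (\<lambda>s. ?A s - 2 * ?B s)"
    using A integrable_mult_right[OF B] by (rule Bochner_Integration.integrable_diff)
  have "(\<integral>s. ?A s - 2 * ?B s \<partial>\<mu>) = (\<integral>s. ?A s \<partial>\<mu>) - (\<integral>s. 2 * ?B s \<partial>\<mu>)"
    using A integrable_mult_right[OF B] by (rule Bochner_Integration.integral_diff)
  also have "(\<integral>s. 2 * ?B s \<partial>\<mu>) = 2 * (\<integral>s. ?B s \<partial>\<mu>)"
    by (rule integral_mult_right_zero)
  also have "(\<integral>s. ?A s \<partial>\<mu>) = c * trunc_mass a"
    unfolding trunc_mass_def by (simp add: mult.commute)
  also have "(\<integral>s. ?B s \<partial>\<mu>) = total_mass - trunc_mass b"
    unfolding total_mass_def trunc_mass_def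
    by (rule Bochner_Integration.integral_diff[OF integrable_weight integrable_trunc_weight])
  finally show "(\<integral>s. ?A s - 2 * ?B s \<partial>\<mu>) = c * trunc_mass a - 2 * (total_mass - trunc_mass b)" .
qed

lemma trunc_mass_tendsto_total_mass: "(trunc_mass \<longlongrightarrow> total_mass) at_top"
proof -
  have "((\<lambda>R. \<integral>s. indicator {-R..R} s * (1 + s^2) \<partial>\<mu>) \<longlongrightarrow> (\<integral>s. 1 + s^2 \<partial>\<mu>)) at_top"
  proof (rule integral_dominated_convergence_at_top[where w="\<lambda>s. 1 + s^2"])
    show "(\<lambda>s. 1 + s^2) \<in> borel_measurable \<mu>" by (rule borel_measurable_mu) measurable
    show "(\<lambda>s. indicator {-R..R} s * (1 + s^2)) \<in> borel_measurable \<mu>" for R :: real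
      by (rule borel_measurable_mu) measurable
    show "AE s in \<mu>. ((\<lambda>R. indicator {-R..R} s * (1 + s^2)) \<longlongrightarrow> 1 + s^2) at_top"
    proof (rule AE_I2, rule tendsto_eventually)
      fix s :: real
      show "\<forall>\<^sub>F R in at_top. indicator {-R..R} s * (1 + s^2) = 1 + s^2"
        unfolding eventually_at_top_linorder
        by (intro exI[of _ "\<bar>s\<bar>"]) (auto simp: indicator_def abs_le_iff)
    qed
    show "\<forall>\<^sub>F R in at_top. AE s in \<mu>. norm (indicator {-R..R} s * (1 + s^2)) \<le> 1 + s^2"
      by (intro always_eventually allI AE_I2) (auto simp: indicator_def add_nonneg_nonneg)
  qed (rule integrable_weight)
  thus ?thesis unfolding trunc_mass_def[abs_def] total_mass_def .
qed

end

section \<open>Orbits of a Herglotz generator\<close>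

locale herglotz_orbit = herglotz_generator +
  fixes w :: "real \<Rightarrow> complex"
  assumes Im_orbit_pos: "\<And>t. t \<ge> 0 \<Longrightarrow> Im (w t) > 0"
    and orbit_solves: "\<And>t. t \<ge> 0 \<Longrightarrow> (w has_vector_derivative G (w t)) (at t within {0..})"
    and orbit_tendsto_infinity: "filterlim w at_infinity at_top"
begin

lemma orbit_has_vector_derivative:
  assumes "t > 0"
  shows "(w has_vector_derivative G (w t)) (at t)"
proof -
  have "(w has_vector_derivative G (w t)) (at t within {0..})"
    using assms by (intro orbit_solves) simp
  hence "(w has_vector_derivative G (w t)) (at t within {0<..})"
    by (rule has_vector_derivative_within_subset) auto
  thus ?thesis using at_within_open[of t "{0<..}"] assms by simp
qed

lemma orbit_continuous_on: "a > 0 \<Longrightarrow> continuous_on {a..b} w"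
  by (intro continuous_at_imp_continuous_on ballI
      has_vector_derivative_continuous[OF orbit_has_vector_derivative]) auto

lemma eventually_orbit_has_vector_derivative:
  "eventually (\<lambda>t. (w has_vector_derivative G (w t)) (at t)) at_top"
  using eventually_gt_at_top[of 0] by eventually_elim (rule orbit_has_vector_derivative)

lemma norm_orbit_tendsto_top: "filterlim (\<lambda>t. cmod (w t)) at_top at_top"
  using orbit_tendsto_infinity by (rule filterlim_at_infinity_imp_norm_at_top)

lemma Im_orbit_mono:
  assumes "0 < a" "a \<le> b"
  shows "Im (w a) \<le> Im (w b)"
proof (rule DERIV_nonneg_imp_increasing_open[OF assms(2)])
  fix x assume "a < x" "x < b"
  thus "\<exists>y. ((\<lambda>t. Im (w t)) has_real_derivative y) (at x) \<and> 0 \<le> y"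
    using has_field_derivative_Im[OF orbit_has_vector_derivative] Im_G_nonneg Im_orbit_pos assms
    by (meson less_eq_real_def less_trans)
qed (use orbit_continuous_on[OF assms(1)] in \<open>intro continuous_intros\<close>)

lemma ln_Im_orbit_lower_bound:
  fixes C R t0 :: real
  defines "F \<equiv> \<lambda>t. 2 / C^2 * (ln (R + C * sqrt t) + R / (R + C * sqrt t))"
  assumes C: "C > 0" and R: "R \<ge> 0" and t0: "t0 > 0"
    and bound: "\<And>t. t \<ge> t0 \<Longrightarrow> cmod (w t) \<le> C * sqrt t" and t: "t \<ge> t0"
  shows "ln (Im (w t0)) + \<alpha> * (t - t0) + trunc_mass R * (F t - F t0) \<le> ln (Im (w t))"
proof -
  define h where "h t = ln (Im (w t)) - \<alpha> * t - trunc_mass R * F t" for t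
  have h': "DERIV h x :> Im (G (w x)) / Im (w x) - \<alpha> - trunc_mass R * (1 / (R + C * sqrt x)^2)"
    if x: "x > 0" for x
  proof -
    have "DERIV (\<lambda>t. ln (Im (w t))) x :> Im (G (w x)) / Im (w x)"
      using DERIV_chain2[OF DERIV_ln_divide has_field_derivative_Im[OF orbit_has_vector_derivative]]
        Im_orbit_pos x by simp
    thus ?thesis unfolding h_def F_def
      by (intro DERIV_diff DERIV_cmult antiderivative_inverse_square_affine_sqrt C R x)
         (auto intro!: derivative_eq_intros)
  qed
  have "h t0 \<le> h t"
  proof (rule DERIV_nonneg_imp_increasing_open[OF t])
    fix x assume x: "t0 < x" "x < t"
    hence x0: "x > 0" and y: "Im (w x) > 0" using t0 Im_orbit_pos by auto
    have "w x \<noteq> 0" using y by auto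
    hence "R + cmod (w x) > 0" using R by (simp add: add_nonneg_pos)
    hence "0 < (R + cmod (w x))^2" by simp
    moreover have "(R + cmod (w x))^2 \<le> (R + C * sqrt x)^2"
      using bound[of x] x R by (intro power_mono) auto
    ultimately have "Im (w x) * trunc_mass R / (R + C * sqrt x)^2
        \<le> Im (w x) * trunc_mass R / (R + cmod (w x))^2"
      using y trunc_mass_nonneg by (intro divide_left_mono mult_pos_pos) auto
    also have "\<dots> \<le> Im (G (w x)) - \<alpha> * Im (w x)"
      using Im_G_ge_trunc_mass[OF y R] by simp
    finally have "\<alpha> + trunc_mass R * (1 / (R + C * sqrt x)^2) \<le> Im (G (w x)) / Im (w x)"
      using y by (simp add: field_simps)
    thus "\<exists>y. DERIV h x :> y \<and> 0 \<le> y" using h'[OF x0] by auto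
  next
    show "continuous_on {t0..t} h"
      using t0 by (intro continuous_at_imp_continuous_on ballI DERIV_isCont[OF h']) auto
  qed
  thus ?thesis by (simp add: h_def algebra_simps)
qed

lemma sqrt_growth_imp_alpha_0_trunc_mass_le:
  assumes C: "C > 0" and bound: "eventually (\<lambda>t. cmod (w t) \<le> C * sqrt t) at_top" and R: "R \<ge> 0"
  shows "\<alpha> = 0 \<and> trunc_mass R \<le> C^2 / 2"
proof -
  define F where "F t = 2 / C^2 * (ln (R + C * sqrt t) + R / (R + C * sqrt t))" for t
  define m where "m = trunc_mass R"
  obtain t0 where t0: "t0 > 0" "\<And>t. t \<ge> t0 \<Longrightarrow> cmod (w t) \<le> C * sqrt t"
    using eventually_conj[OF bound eventually_gt_at_top[of 0]]
    unfolding eventually_at_top_linorder by (metis order.refl order.strict_trans2)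
  define K where "K = ln C - ln (Im (w t0)) + \<alpha> * t0 + m * F t0 - 2 * m / C^2 * ln C"
  have "eventually (\<lambda>t. \<alpha> * t + (m / C^2 - 1/2) * ln t \<le> K) at_top"
    using eventually_ge_at_top[of t0]
  proof eventually_elim
    case (elim t)
    hence t: "t > 0" using t0 by simp
    have ln_sqrt: "ln (C * sqrt t) = ln C + 1/2 * ln t"
      using C t by (simp add: ln_mult ln_sqrt)
    have "Im (w t) \<le> C * sqrt t"
      using abs_Im_le_cmod[of "w t"] t0(2)[OF elim] by linarith
    hence "ln (Im (w t)) \<le> ln (C * sqrt t)"
      using Im_orbit_pos[of t] t by (intro ln_mono) auto
    hence upper: "ln (Im (w t)) \<le> ln C + 1/2 * ln t" using ln_sqrt by simp
    have "ln (C * sqrt t) \<le> ln (R + C * sqrt t)" using C t R by (intro ln_mono) auto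
    moreover have "R / (R + C * sqrt t) \<ge> 0" using C t R by simp
    ultimately have "2 / C^2 * (ln C + 1/2 * ln t) \<le> F t"
      unfolding F_def ln_sqrt by (intro mult_left_mono) auto
    hence "m * (2 / C^2 * (ln C + 1/2 * ln t)) \<le> m * F t"
      using trunc_mass_nonneg by (intro mult_left_mono) (auto simp: m_def)
    moreover have "m * (2 / C^2 * (ln C + 1/2 * ln t)) = m / C^2 * ln t + 2 * m / C^2 * ln C"
      using C by (simp add: field_simps)
    moreover have "ln (Im (w t0)) + \<alpha> * (t - t0) + m * (F t - F t0) \<le> ln (Im (w t))"
      using ln_Im_orbit_lower_bound[OF C R t0(1) t0(2) elim] by (simp add: F_def m_def)
    ultimately show ?case using upper by (simp add: K_def algebra_simps)
  qed
  from linear_plus_ln_bounded_above_imp[OF this alpha_nonneg]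
  show ?thesis using C by (simp add: m_def field_simps)
qed

lemma sqrt_growth_imp_beta_eq_mean:
  assumes square: "integrable \<mu> (\<lambda>s. s^2)"
    and C: "C > 0" and bound: "eventually (\<lambda>t. cmod (w t) \<le> C * sqrt t) at_top"
  shows "\<beta> = (\<integral>s. s \<partial>\<mu>)"
proof -
  interpret herglotz_generator_finite_moment \<mu> \<alpha> \<beta> G
    using square by unfold_locales
  have alpha: "\<alpha> = 0" using sqrt_growth_imp_alpha_0_trunc_mass_le[OF C bound order.refl] by simp
  let ?I = "\<lambda>t. \<integral>s. of_real (1 + s^2) / (of_real s - w t) \<partial>\<mu>"
  have "eventually (\<lambda>t. Im (w t) \<ge> Im (w 1)) at_top"
    using eventually_ge_at_top[of 1] by eventually_elim (rule Im_orbit_mono, auto)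
  hence "(?I \<longlongrightarrow> 0) at_top"
    using Im_orbit_pos[of 1] by (intro cauchy_integral_tendsto_0 orbit_tendsto_infinity) auto
  hence "((\<lambda>t. of_real drift + ?I t) \<longlongrightarrow> of_real drift) at_top"
    using tendsto_add[OF tendsto_const] by fastforce
  moreover have "eventually (\<lambda>t. of_real drift + ?I t = G (w t)) at_top"
    using eventually_ge_at_top[of 0]
    by eventually_elim (simp add: G_eq_cauchy_integral[OF Im_orbit_pos] alpha)
  ultimately have "((\<lambda>t. G (w t)) \<longlongrightarrow> of_real drift) at_top"
    by (rule Lim_transform_eventually)
  hence lim_drift: "((\<lambda>t. w t / of_real t) \<longlongrightarrow> of_real drift) at_top"
    by (rule lhospital_at_top_divide_ident[OF eventually_orbit_has_vector_derivative])
  have lim_0: "((\<lambda>t. w t / of_real t) \<longlongrightarrow> 0) at_top"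
  proof (rule Lim_null_comparison)
    show "((\<lambda>t. C / sqrt t) \<longlongrightarrow> 0) at_top" using C by real_asymp
    show "\<forall>\<^sub>F t in at_top. norm (w t / of_real t) \<le> C / sqrt t"
      using bound eventually_gt_at_top[of 0]
    proof eventually_elim
      case (elim t)
      hence "cmod (w t) / t \<le> C * sqrt t / t" by (simp add: divide_right_mono)
      also have "C * sqrt t / t = C / sqrt t"
        using elim by (simp add: field_simps flip: real_sqrt_mult)
      finally show ?case using elim by (simp add: norm_divide)
    qed
  qed
  have "drift = 0" using tendsto_unique[OF _ lim_drift lim_0] by simp
  thus ?thesis by (simp add: drift_def)
qed

lemma sqrt_growth_imp_moment_conditions:
  assumes C: "C > 0" and bound: "eventually (\<lambda>t. cmod (w t) \<le> C * sqrt t) at_top"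
  shows "\<alpha> = 0 \<and> (\<integral>\<^sup>+ s. ennreal (s^2) \<partial>\<mu>) < \<infinity> \<and> \<beta> = (\<integral>s. s \<partial>\<mu>)"
proof -
  have "(\<integral>\<^sup>+ s. ennreal (s^2) \<partial>\<mu>) < \<infinity>"
    using sqrt_growth_imp_alpha_0_trunc_mass_le[OF C bound]
    by (intro nn_integral_square_finite_if_trunc_mass_bounded) blast
  thus ?thesis
    using sqrt_growth_imp_alpha_0_trunc_mass_le[OF C bound order.refl]
      sqrt_growth_imp_beta_eq_mean[OF integrable_square_if_nn_integral_finite C bound] by simp
qed

end

section \<open>The extremal case\<close>

text \<open>
  The cross term Re z (Re z Im G(z) - Im z Re G(z)) has the sign of the derivative of
  Im^2 w / |w|^2 along an orbit (see DERIV_Im_sq_div_norm_sq below); for G a Cauchy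
  integral it is Im z times the integral of the kernel in cross_kernel_eq.
\<close>

lemma cross_kernel_eq:
  fixes z :: complex and s :: real
  defines "K \<equiv> of_real (1 + s^2) / (of_real s - z)"
  shows "Re z * (Re z * Im K - Im z * Re K)
       = Im z * ((1 + s^2) * (Re z * (2 * Re z - s)) / ((s - Re z)^2 + (Im z)^2))"
proof -
  have "x * (x * (p * y / D) - y * (p * (s - x) / D)) = y * (p * (x * (2 * x - s)) / D)"
    for p D x y :: real
    unfolding divide_inverse by algebra
  thus ?thesis unfolding K_def by (simp add: Re_divide Im_divide power2_eq_square)
qed

lemma cross_numerator_bounds:
  fixes s x y :: real
  shows cross_numerator_ge_square: "\<bar>s\<bar> \<le> \<bar>x\<bar> \<Longrightarrow> x^2 \<le> x * (2 * x - s)"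
    and cross_denominator_le: "\<bar>s\<bar> \<le> \<bar>x\<bar> \<Longrightarrow> (s - x)^2 + y^2 \<le> 4 * (x^2 + y^2)"
    and cross_numerator_nonneg: "\<bar>s\<bar> \<le> 2 * \<bar>x\<bar> \<Longrightarrow> 0 \<le> x * (2 * x - s)"
    and cross_numerator_ge: "-2 * ((s - x)^2 + y^2) \<le> x * (2 * x - s)"
proof -
  have xs: "x * s \<le> \<bar>x\<bar> * \<bar>s\<bar>" by (metis abs_ge_self abs_mult)
  show "x^2 \<le> x * (2 * x - s)" if "\<bar>s\<bar> \<le> \<bar>x\<bar>"
    using xs mult_left_mono[OF that abs_ge_zero[of x]] by (simp add: power2_eq_square algebra_simps)
  show "(s - x)^2 + y^2 \<le> 4 * (x^2 + y^2)" if "\<bar>s\<bar> \<le> \<bar>x\<bar>"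
  proof -
    have "\<bar>s - x\<bar> \<le> \<bar>2 * x\<bar>" using that by linarith
    hence "(s - x)^2 \<le> (2 * x)^2" by (simp only: abs_le_square_iff)
    hence "(s - x)^2 \<le> 4 * x^2" by (simp add: power_mult_distrib)
    thus ?thesis unfolding distrib_left using zero_le_power2[of y] by linarith
  qed
  show "0 \<le> x * (2 * x - s)" if "\<bar>s\<bar> \<le> 2 * \<bar>x\<bar>"
    using xs mult_left_mono[OF that abs_ge_zero[of x]] by (simp add: power2_eq_square algebra_simps)
  have "x * (2 * x - s) + 2 * ((s - x)^2 + y^2) = 4 * (x - 5/8 * s)^2 + 7/16 * s^2 + 2 * y^2"
    by (simp add: power2_eq_square algebra_simps)
  also have "\<dots> \<ge> 0" by simp
  finally show "-2 * ((s - x)^2 + y^2) \<le> x * (2 * x - s)" by simp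
qed

lemma cross_kernel_lower_bound:
  fixes s x y :: real
  assumes y: "y > 0"
  shows "(1 + s^2) * (x * (2 * x - s)) / ((s - x)^2 + y^2)
     \<ge> indicator {-\<bar>x\<bar>..\<bar>x\<bar>} s * (1 + s^2) * (x^2 / (4 * (x^2 + y^2)))
        - 2 * ((1 + s^2) - indicator {-(2*\<bar>x\<bar>)..2*\<bar>x\<bar>} s * (1 + s^2))"
proof -
  define D where "D = (s - x)^2 + y^2"
  have D: "D > 0" using y by (simp add: D_def add_nonneg_pos)
  have "x * (2 * x - s) / D \<ge> indicator {-\<bar>x\<bar>..\<bar>x\<bar>} s * (x^2 / (4 * (x^2 + y^2)))
      - 2 * (1 - indicator {-(2*\<bar>x\<bar>)..2*\<bar>x\<bar>} s)"
  proof -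
    consider (near) "\<bar>s\<bar> \<le> \<bar>x\<bar>" | (middle) "\<bar>x\<bar> < \<bar>s\<bar>" "\<bar>s\<bar> \<le> 2 * \<bar>x\<bar>"
      | (far) "2 * \<bar>x\<bar> < \<bar>s\<bar>" by linarith
    thus ?thesis
    proof cases
      case near
      have "x^2 * D \<le> x * (2 * x - s) * (4 * (x^2 + y^2))"
        using cross_numerator_ge_square[OF near] cross_denominator_le[OF near, of y] D
          order_trans[OF zero_le_power2 cross_numerator_ge_square[OF near]]
        by (intro mult_mono) (auto simp: D_def)
      hence "x^2 / (4 * (x^2 + y^2)) \<le> x * (2 * x - s) / D"
        using D y by (simp add: divide_simps add_nonneg_pos)
      thus ?thesis using near by (simp add: indicator_def abs_le_iff)
    next
      case middle
      hence "indicator {-\<bar>x\<bar>..\<bar>x\<bar>} s = (0::real)" "indicator {-(2*\<bar>x\<bar>)..2*\<bar>x\<bar>} s = (1::real)"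
        by (auto simp: indicator_def abs_le_iff)
      thus ?thesis using cross_numerator_nonneg[of s x] middle D by simp
    next
      case far
      hence "indicator {-\<bar>x\<bar>..\<bar>x\<bar>} s = (0::real)" "indicator {-(2*\<bar>x\<bar>)..2*\<bar>x\<bar>} s = (0::real)"
        by (auto simp: indicator_def abs_le_iff)
      moreover have "-2 \<le> x * (2 * x - s) / D"
        using cross_numerator_ge[of s x y] D by (simp add: D_def divide_simps)
      ultimately show ?thesis by simp
    qed
  qed
  hence "(1 + s^2) * (x * (2 * x - s) / D) \<ge> (1 + s^2) * (indicator {-\<bar>x\<bar>..\<bar>x\<bar>} s
      * (x^2 / (4 * (x^2 + y^2))) - 2 * (1 - indicator {-(2*\<bar>x\<bar>)..2*\<bar>x\<bar>} s))"
    by (intro mult_left_mono) (auto simp: add_nonneg_nonneg)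
  thus ?thesis by (simp add: D_def algebra_simps)
qed

locale extremal_herglotz_generator = herglotz_generator_finite_moment +
  assumes alpha_eq_0: "\<alpha> = 0" and beta_eq_mean: "\<beta> = (\<integral>s. s \<partial>\<mu>)"
begin

lemma G_eq_cauchy: "Im z > 0 \<Longrightarrow> G z = (\<integral>s. of_real (1 + s^2) / (of_real s - z) \<partial>\<mu>)"
  using G_eq_cauchy_integral unfolding drift_def by (simp add: alpha_eq_0 beta_eq_mean)

lemma norm_G_le:
  assumes z: "Im z > 0"
  shows "cmod (G z) \<le> total_mass / Im z"
proof -
  have "cmod (G z) \<le> (\<integral>s. cmod (of_real (1 + s^2) / (of_real s - z)) \<partial>\<mu>)"
    unfolding G_eq_cauchy[OF z] by (rule integral_norm_bound)
  also have "\<dots> \<le> (\<integral>s. (1 + s^2) / Im z \<partial>\<mu>)"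
    using integrable_cauchy_kernel[OF z] integrable_weight norm_cauchy_kernel_le[OF z]
    by (intro integral_mono) (auto intro: integrable_divide)
  also have "\<dots> = total_mass / Im z" by (simp add: total_mass_def)
  finally show ?thesis .
qed

lemma moment_kernel_integral:
  assumes z: "Im z > 0"
  shows "integrable \<mu> (\<lambda>s. of_real ((1 + s^2) * s) / (of_real s - z))"
    and "(\<integral>s. of_real ((1 + s^2) * s) / (of_real s - z) \<partial>\<mu>) = of_real total_mass + z * G z"
proof -
  have "of_real s - z \<noteq> 0" for s using z by (auto simp: complex_eq_iff)
  hence split: "of_real ((1 + s^2) * s) / (of_real s - z)
      = of_real (1 + s^2) + z * (of_real (1 + s^2) / (of_real s - z))" for s
    by (simp add: field_simps)
  have weight: "integrable \<mu> (\<lambda>s. of_real (1 + s^2) :: complex)"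
    using integrable_weight by (rule integrable_of_real)
  have cauchy: "integrable \<mu> (\<lambda>s. z * (of_real (1 + s^2) / (of_real s - z)))"
    using integrable_cauchy_kernel[OF z] by (rule integrable_mult_right)
  show "integrable \<mu> (\<lambda>s. of_real ((1 + s^2) * s) / (of_real s - z))"
    unfolding split using weight cauchy by (rule Bochner_Integration.integrable_add)
  have "(\<integral>s. of_real ((1 + s^2) * s) / (of_real s - z) \<partial>\<mu>)
      = (\<integral>s. of_real (1 + s^2) \<partial>\<mu>) + (\<integral>s. z * (of_real (1 + s^2) / (of_real s - z)) \<partial>\<mu>)"
    unfolding split by (rule Bochner_Integration.integral_add[OF weight cauchy])
  also have "(\<integral>s. of_real (1 + s^2) \<partial>\<mu>) = (of_real total_mass :: complex)"
    unfolding total_mass_def by (rule integral_complex_of_real)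
  also have "(\<integral>s. z * (of_real (1 + s^2) / (of_real s - z)) \<partial>\<mu>) = z * G z"
    unfolding G_eq_cauchy[OF z] by (rule integral_mult_right_zero)
  finally show "(\<integral>s. of_real ((1 + s^2) * s) / (of_real s - z) \<partial>\<mu>) = of_real total_mass + z * G z" .
qed

lemma cross_term_ge:
  fixes z :: complex
  defines "x \<equiv> Re z" and "y \<equiv> Im z"
  defines "c \<equiv> x^2 / (4 * (x^2 + y^2))"
  assumes z: "Im z > 0"
  shows "x * (x * Im (G z) - y * Re (G z))
         \<ge> y * (c * trunc_mass \<bar>x\<bar> - 2 * (total_mass - trunc_mass (2 * \<bar>x\<bar>)))"
proof -
  define K where "K s = of_real (1 + s^2) / (of_real s - z)" for s
  define g where "g s = indicator {-\<bar>x\<bar>..\<bar>x\<bar>} s * (1 + s^2) * c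
        - 2 * ((1 + s^2) - indicator {-(2*\<bar>x\<bar>)..2*\<bar>x\<bar>} s * (1 + s^2))" for s
  have y: "y > 0" using z by (simp add: y_def)
  have K: "integrable \<mu> K" using integrable_cauchy_kernel[OF z] by (simp add: K_def[abs_def])
  have "Re (G z) = (\<integral>s. Re (K s) \<partial>\<mu>)" "Im (G z) = (\<integral>s. Im (K s) \<partial>\<mu>)"
    unfolding G_eq_cauchy[OF z] K_def using integrable_cauchy_kernel[OF z] by simp_all
  hence "x * (x * Im (G z) - y * Re (G z)) = (\<integral>s. x * (x * Im (K s) - y * Re (K s)) \<partial>\<mu>)"
    using integrable_Re[OF K] integrable_Im[OF K] by simp
  also have "\<dots> \<ge> (\<integral>s. y * g s \<partial>\<mu>)"
  proof (rule integral_mono)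
    show "integrable \<mu> (\<lambda>s. x * (x * Im (K s) - y * Re (K s)))"
      using integrable_Re[OF K] integrable_Im[OF K] by simp
    show "integrable \<mu> (\<lambda>s. y * g s)"
      unfolding g_def by (intro integrable_mult_right integrable_trunc_weight_combination)
    show "y * g s \<le> x * (x * Im (K s) - y * Re (K s))" for s
      unfolding K_def cross_kernel_eq x_def y_def g_def c_def
      using cross_kernel_lower_bound[OF y[unfolded y_def], where s=s and x="Re z"] z
      by (intro mult_left_mono) auto
  qed
  also have "(\<integral>s. y * g s \<partial>\<mu>) = y * (c * trunc_mass \<bar>x\<bar> - 2 * (total_mass - trunc_mass (2 * \<bar>x\<bar>)))"
    unfolding g_def integral_mult_right_zero integral_trunc_weight_combination ..
  finally show ?thesis .
qed

lemma cross_term_lower_bound: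
  assumes z: "Im z > 0" and thin: "(Im z)^2 \<le> (cmod z)^2 / 4"
  shows "Re z * (Re z * Im (G z) - Im z * Re (G z))
         \<ge> Im z * (trunc_mass (cmod z / 2) / 16 - 2 * (total_mass - trunc_mass (cmod z)))"
proof -
  define x y where "x = Re z" and "y = Im z"
  define c where "c = x^2 / (4 * (x^2 + y^2))"
  have y: "y > 0" using z by (simp add: y_def)
  have norm: "(cmod z)^2 = x^2 + y^2" by (simp add: cmod_power2 x_def y_def)
  have "4 * y^2 \<le> x^2 + y^2" using thin norm by (simp add: y_def)
  hence "x^2 + y^2 \<le> 4 * x^2" using zero_le_power2[of x] by linarith
  hence x2: "x^2 \<ge> (cmod z)^2 / 4" unfolding norm by simp
  hence "(cmod z / 2)^2 \<le> x^2" by (simp add: power_divide)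
  hence x: "cmod z / 2 \<le> \<bar>x\<bar>" by (simp add: abs_le_square_iff[symmetric])
  have "x^2 + y^2 > 0" using y by (simp add: add_nonneg_pos)
  hence "c \<ge> 1/16" unfolding c_def using x2 norm by (simp add: field_simps)
  have "trunc_mass (cmod z / 2) / 16 \<le> 1/16 * trunc_mass \<bar>x\<bar>"
    using trunc_mass_mono[OF x] by simp
  also have "\<dots> \<le> c * trunc_mass \<bar>x\<bar>"
    using \<open>c \<ge> 1/16\<close> trunc_mass_nonneg by (rule mult_right_mono)
  finally have "trunc_mass (cmod z / 2) / 16 \<le> c * trunc_mass \<bar>x\<bar>" .
  moreover have "trunc_mass (cmod z) \<le> trunc_mass (2 * \<bar>x\<bar>)" using x by (intro trunc_mass_mono) simp
  ultimately have "trunc_mass (cmod z / 2) / 16 - 2 * (total_mass - trunc_mass (cmod z))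
      \<le> c * trunc_mass \<bar>x\<bar> - 2 * (total_mass - trunc_mass (2 * \<bar>x\<bar>))"
    by argo
  hence "y * (trunc_mass (cmod z / 2) / 16 - 2 * (total_mass - trunc_mass (cmod z)))
      \<le> y * (c * trunc_mass \<bar>x\<bar> - 2 * (total_mass - trunc_mass (2 * \<bar>x\<bar>)))"
    using y by (intro mult_left_mono) auto
  thus ?thesis using cross_term_ge[OF z] by (simp add: x_def y_def c_def)
qed

lemma cross_term_nonneg_near_infinity:
  assumes pos: "total_mass > 0"
  obtains M where "\<And>z. Im z > 0 \<Longrightarrow> cmod z \<ge> M \<Longrightarrow> (Im z)^2 \<le> (cmod z)^2 / 4
    \<Longrightarrow> Re z * (Re z * Im (G z) - Im z * Re (G z)) \<ge> 0"
proof -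
  obtain R0 where R0: "\<And>R. R \<ge> R0 \<Longrightarrow> trunc_mass R > total_mass - total_mass / 64"
    using order_tendstoD(1)[OF trunc_mass_tendsto_total_mass, of "total_mass - total_mass / 64"] pos
    unfolding eventually_at_top_linorder by auto
  show thesis
  proof (rule that[of "2 * max R0 0"])
    fix z assume z: "Im z > 0" "cmod z \<ge> 2 * max R0 0" "(Im z)^2 \<le> (cmod z)^2 / 4"
    have "trunc_mass (cmod z / 2) > total_mass - total_mass / 64"
      using z(2) by (intro R0) simp
    moreover have "trunc_mass (cmod z) > total_mass - total_mass / 64"
      using z(2) by (intro R0) simp
    ultimately have "trunc_mass (cmod z / 2) / 16 - 2 * (total_mass - trunc_mass (cmod z)) \<ge> 0"
      using pos by argo
    hence "Im z * (trunc_mass (cmod z / 2) / 16 - 2 * (total_mass - trunc_mass (cmod z))) \<ge> 0"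
      using z(1) by simp
    thus "Re z * (Re z * Im (G z) - Im z * Re (G z)) \<ge> 0"
      using cross_term_lower_bound[OF z(1,3)] by linarith
  qed
qed

end

locale extremal_herglotz_orbit =
  herglotz_orbit \<mu> \<alpha> \<beta> G w + extremal_herglotz_generator \<mu> \<alpha> \<beta> G for \<mu> \<alpha> \<beta> G w
begin

lemma total_mass_pos: "total_mass > 0"
proof (rule ccontr)
  assume "\<not> total_mass > 0"
  hence "total_mass = 0" using total_mass_nonneg by simp
  hence "G (w t) = 0" if "t \<ge> 0" for t
    using norm_G_le[OF Im_orbit_pos[OF that]] by simp
  hence "(w has_vector_derivative 0) (at t within {1..})" if "t \<in> {1..}" for t
    using orbit_has_vector_derivative[of t] that by (auto intro: has_vector_derivative_at_within)
  then obtain c where c: "\<And>t. t \<in> {1..} \<Longrightarrow> w t = c"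
    using has_vector_derivative_zero_constant[OF convex_real_interval(1)] by blast
  have "eventually (\<lambda>t. cmod (w t) > cmod c) at_top"
    using norm_orbit_tendsto_top by (simp add: filterlim_at_top_dense)
  moreover have "eventually (\<lambda>t. w t = c) at_top"
    using eventually_ge_at_top[of 1] by eventually_elim (simp add: c)
  ultimately have "eventually (\<lambda>t::real. False) at_top" by eventually_elim simp
  thus False by simp
qed

lemma DERIV_Im_sq_div_norm_sq:
  assumes t: "t > 0"
  shows "DERIV (\<lambda>t. (Im (w t))^2 / ((Re (w t))^2 + (Im (w t))^2)) t :>
     2 * Im (w t) * (Re (w t) * (Re (w t) * Im (G (w t)) - Im (w t) * Re (G (w t))))
       / ((Re (w t))^2 + (Im (w t))^2)^2"
proof -
  define x y x' y' where "x = Re (w t)" and "y = Im (w t)"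
    and "x' = Re (G (w t))" and "y' = Im (G (w t))"
  have "y > 0" using Im_orbit_pos t by (simp add: y_def)
  hence nonzero: "x^2 + y^2 \<noteq> 0" by simp
  have dx: "DERIV (\<lambda>t. Re (w t)) t :> x'"
    unfolding x'_def by (rule has_field_derivative_Re[OF orbit_has_vector_derivative[OF t]])
  have dy: "DERIV (\<lambda>t. Im (w t)) t :> y'"
    unfolding y'_def by (rule has_field_derivative_Im[OF orbit_has_vector_derivative[OF t]])
  have "DERIV (\<lambda>t. (Im (w t))^2 / ((Re (w t))^2 + (Im (w t))^2)) t :>
      ((2 * y * y') * (x^2 + y^2) - y^2 * (2 * x * x' + 2 * y * y')) / (x^2 + y^2)^2"
    using DERIV_divide[OF DERIV_power[OF dy, of 2]
        DERIV_add[OF DERIV_power[OF dx, of 2] DERIV_power[OF dy, of 2]]] nonzero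
    by (simp add: x_def y_def power2_eq_square algebra_simps)
  moreover have "(2 * y * y') * (x^2 + y^2) - y^2 * (2 * x * x' + 2 * y * y')
      = 2 * y * (x * (x * y' - y * x'))"
    by (simp add: power2_eq_square algebra_simps)
  ultimately show ?thesis by (simp add: x_def y_def x'_def y'_def)
qed

lemma orbit_eventually_in_sector: "\<exists>c>0. eventually (\<lambda>t. c * cmod (w t) \<le> Im (w t)) at_top"
proof -
  obtain M where M: "\<And>z. Im z > 0 \<Longrightarrow> cmod z \<ge> M \<Longrightarrow> (Im z)^2 \<le> (cmod z)^2 / 4
      \<Longrightarrow> Re z * (Re z * Im (G z) - Im z * Re (G z)) \<ge> 0"
    using cross_term_nonneg_near_infinity[OF total_mass_pos] by blast
  obtain t1 where t1: "t1 \<ge> 1" "\<And>t. t \<ge> t1 \<Longrightarrow> cmod (w t) \<ge> M"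
    using eventually_conj[OF eventually_ge_at_top[of 1]
      filterlim_at_top[THEN iffD1, OF norm_orbit_tendsto_top, rule_format, of M]]
    unfolding eventually_at_top_linorder by (metis order.refl order.trans)
  define r where "r t = (Im (w t))^2 / ((Re (w t))^2 + (Im (w t))^2)" for t
  have r': "DERIV r x :>
      2 * Im (w x) * (Re (w x) * (Re (w x) * Im (G (w x)) - Im (w x) * Re (G (w x))))
        / ((Re (w x))^2 + (Im (w x))^2)^2" if "x > 0" for x
    unfolding r_def[abs_def] using that by (rule DERIV_Im_sq_div_norm_sq)
  define \<delta> where "\<delta> = min (r t1) (1/4)"
  have "r t1 > 0" unfolding r_def using Im_orbit_pos[of t1] t1 by (simp add: add_nonneg_pos)
  hence \<delta>: "\<delta> > 0" by (simp add: \<delta>_def)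
  \<comment> \<open>r cannot decrease while r < 1/4, because then the orbit is far out in a thin sector\<close>
  have r_ge: "r t \<ge> \<delta>" if t: "t \<ge> t1" for t
    unfolding \<delta>_def
  proof (rule ge_min_if_DERIV_nonneg_below[OF t])
    show "continuous_on {t1..t} r"
      using t1 by (intro continuous_at_imp_continuous_on ballI DERIV_isCont[OF r']) auto
    fix x assume x: "t1 < x" "x < t"
    hence x0: "x > 0" using t1 by simp
    show "r differentiable (at x)" using r'[OF x0] real_differentiable_def by blast
    assume "r x < 1/4"
    moreover have "(Re (w x))^2 + (Im (w x))^2 > 0"
      using Im_orbit_pos[of x] x0 by (simp add: add_nonneg_pos)
    ultimately have "(Im (w x))^2 \<le> (cmod (w x))^2 / 4"
      by (simp add: r_def cmod_power2 divide_simps)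
    hence "Re (w x) * (Re (w x) * Im (G (w x)) - Im (w x) * Re (G (w x))) \<ge> 0"
      using M Im_orbit_pos t1(2) x x0 by simp
    thus "\<exists>y. DERIV r x :> y \<and> y \<ge> 0" using r'[OF x0] Im_orbit_pos[of x] x0 by fastforce
  qed
  have "sqrt \<delta> * cmod (w t) \<le> Im (w t)" if t: "t \<ge> t1" for t
  proof -
    have "(Re (w t))^2 + (Im (w t))^2 > 0"
      using Im_orbit_pos[of t] t t1 by (simp add: add_nonneg_pos)
    hence "\<delta> * (cmod (w t))^2 \<le> (Im (w t))^2"
      using r_ge[OF t] by (simp add: r_def cmod_power2 field_simps)
    hence "sqrt (\<delta> * (cmod (w t))^2) \<le> sqrt ((Im (w t))^2)" by (rule real_sqrt_le_mono)
    thus ?thesis using Im_orbit_pos[of t] t t1 \<delta> by (simp add: real_sqrt_mult)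
  qed
  thus ?thesis using \<delta> unfolding eventually_at_top_linorder by (intro exI[of _ "sqrt \<delta>"]) auto
qed

lemma moment_integral_orbit_tendsto_0:
  "((\<lambda>t. \<integral>s. of_real ((1 + s^2) * s) / (of_real s - w t) \<partial>\<mu>) \<longlongrightarrow> 0) at_top"
proof -
  obtain c where c: "c > 0" and sector: "eventually (\<lambda>t. c * cmod (w t) \<le> Im (w t)) at_top"
    using orbit_eventually_in_sector by blast
  have "((\<lambda>t. \<integral>s. of_real ((1 + s^2) * s) / (of_real s - w t) \<partial>\<mu>) \<longlongrightarrow> (\<integral>s. 0 \<partial>\<mu>)) at_top"
  proof (rule integral_dominated_convergence_at_top[where w="\<lambda>s. (1 + s^2) * (2 + 2 / c)"])
    show "(\<lambda>s. of_real ((1 + s^2) * s) / (of_real s - w t)) \<in> borel_measurable \<mu>" for t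
      by (rule borel_measurable_mu) measurable
    show "integrable \<mu> (\<lambda>s. (1 + s^2) * (2 + 2 / c))"
      using integrable_weight by (rule integrable_mult_left)
    show "AE s in \<mu>. ((\<lambda>t. of_real ((1 + s^2) * s) / (of_real s - w t)) \<longlongrightarrow> 0) at_top"
      using tendsto_mult[OF tendsto_const tendsto_inverse_diff_0[OF orbit_tendsto_infinity]]
      by (intro AE_I2) (simp add: divide_inverse)
    show "\<forall>\<^sub>F t in at_top. AE s in \<mu>.
        norm (of_real ((1 + s^2) * s) / (of_real s - w t)) \<le> (1 + s^2) * (2 + 2 / c)"
      using sector
    proof eventually_elim
      case (elim t)
      show ?case
      proof (rule AE_I2)
        fix s :: real
        have "\<bar>1 + s^2\<bar> = 1 + s^2" by (simp add: add_nonneg_nonneg)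
        hence "norm (of_real ((1 + s^2) * s) / (of_real s - w t))
            = (1 + s^2) * (\<bar>s\<bar> / cmod (of_real s - w t))"
          unfolding norm_divide norm_of_real abs_mult by simp
        also have "\<dots> \<le> (1 + s^2) * (2 + 2 / c)"
          using abs_le_dist_if_in_sector[OF c elim, of s] c
          by (intro mult_left_mono) (auto simp: divide_le_eq add_nonneg_nonneg mult.commute)
        finally show "norm (of_real ((1 + s^2) * s) / (of_real s - w t)) \<le> (1 + s^2) * (2 + 2 / c)" .
      qed
    qed
  qed simp
  thus ?thesis by simp
qed

lemma orbit_square_div_tendsto: "((\<lambda>t. w t ^ 2 / of_real t) \<longlongrightarrow> - 2 * of_real total_mass) at_top"
proof (rule lhospital_at_top_divide_ident)
  show "eventually (\<lambda>t. ((\<lambda>t. w t ^ 2) has_vector_derivative 2 * (w t * G (w t))) (at t)) at_top"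
    using eventually_orbit_has_vector_derivative
  proof eventually_elim
    case (elim t)
    from has_vector_derivative_mult[OF elim elim] show ?case
      by (simp add: power2_eq_square algebra_simps)
  qed
  let ?E = "\<lambda>t. \<integral>s. of_real ((1 + s^2) * s) / (of_real s - w t) \<partial>\<mu>"
  have "((\<lambda>t. 2 * (?E t - of_real total_mass)) \<longlongrightarrow> 2 * (0 - of_real total_mass)) at_top"
    by (intro tendsto_intros moment_integral_orbit_tendsto_0)
  moreover have "eventually (\<lambda>t. 2 * (?E t - of_real total_mass) = 2 * (w t * G (w t))) at_top"
    using eventually_ge_at_top[of 0]
  proof eventually_elim
    case (elim t)
    show ?case unfolding moment_kernel_integral(2)[OF Im_orbit_pos[OF elim]] by simp
  qed
  ultimately show "((\<lambda>t. 2 * (w t * G (w t))) \<longlongrightarrow> - 2 * of_real total_mass) at_top"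
    by (simp add: Lim_transform_eventually)
qed

lemma orbit_div_sqrt_tendsto:
  "((\<lambda>t. w t / of_real (sqrt t)) \<longlongrightarrow> \<i> * of_real (sqrt (2 * total_mass))) at_top"
proof (rule tendsto_i_mult_if_square_tendsto)
  show "sqrt (2 * total_mass) > 0" using total_mass_pos by simp
  show "eventually (\<lambda>t. Im (w t / of_real (sqrt t)) > 0) at_top"
    using eventually_gt_at_top[of 0]
    by eventually_elim (simp add: Im_divide_of_real Im_orbit_pos)
  have "eventually (\<lambda>t. w t ^ 2 / of_real t = (w t / of_real (sqrt t))^2) at_top"
    using eventually_gt_at_top[of 0]
    by eventually_elim (simp add: power_divide flip: of_real_power)
  with orbit_square_div_tendsto
  have "((\<lambda>t. (w t / of_real (sqrt t))^2) \<longlongrightarrow> - 2 * of_real total_mass) at_top"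
    by (rule Lim_transform_eventually)
  moreover have "- 2 * of_real total_mass = - (of_real (sqrt (2 * total_mass)) ^ 2 :: complex)"
    using total_mass_nonneg by (simp flip: of_real_power)
  ultimately show "((\<lambda>t. (w t / of_real (sqrt t))^2) \<longlongrightarrow> - (of_real (sqrt (2 * total_mass)) ^ 2)) at_top"
    by simp
qed

end

lemma (in herglotz_orbit) moment_conditions_imp_sqrt_asymptotics:
  assumes "\<alpha> = 0" and "(\<integral>\<^sup>+ s. ennreal (s^2) \<partial>\<mu>) < \<infinity>" and "\<beta> = (\<integral>s. s \<partial>\<mu>)"
  shows "(\<integral>s. 1 + s^2 \<partial>\<mu>) > 0
    \<and> ((\<lambda>t. w t / of_real (sqrt t)) \<longlongrightarrow> \<i> * of_real (sqrt (2 * (\<integral>s. 1 + s^2 \<partial>\<mu>)))) at_top"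
proof -
  interpret extremal_herglotz_orbit \<mu> \<alpha> \<beta> G w
    using assms integrable_square_if_nn_integral_finite by unfold_locales auto
  show ?thesis using total_mass_pos orbit_div_sqrt_tendsto unfolding total_mass_def by simp
qed

section \<open>Semigroups\<close>

lemma herglotz_orbit_of_semigroup:
  assumes "herglotz_generator \<mu> \<alpha> \<beta> G" and sg: "semigroup_H \<phi>" and dw: "DW_infinity \<phi>"
    and gen: "infinitesimal_generator \<phi> G" and z: "z \<in> UHP"
  shows "herglotz_orbit \<mu> \<alpha> \<beta> G (\<lambda>t. \<phi> t z)"
proof (intro herglotz_orbit.intro[OF assms(1)] herglotz_orbit_axioms.intro)
  fix t :: real assume t: "t \<ge> 0"
  have "\<phi> t ` UHP \<subseteq> UHP" using sg t unfolding semigroup_H_def by blast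
  thus "Im (\<phi> t z) > 0" using z by (auto simp: UHP_def)
  show "((\<lambda>t. \<phi> t z) has_vector_derivative G (\<phi> t z)) (at t within {0..})"
    using gen z t unfolding infinitesimal_generator_def by blast
next
  show "filterlim (\<lambda>t. \<phi> t z) at_infinity at_top" using dw z unfolding DW_infinity_def by blast
qed

lemma extremal_rate_imp_Limsup_finite:
  assumes "extremal_rate \<phi>" and "z \<in> UHP"
  shows "Limsup at_top (\<lambda>t. ereal (cmod (\<phi> t z) / sqrt t)) < \<infinity>"
proof -
  obtain L where "((\<lambda>t. cmod (\<phi> t z) / sqrt t) \<longlongrightarrow> L) at_top"
    using assms unfolding extremal_rate_def by blast
  hence "Limsup at_top (\<lambda>t. ereal (cmod (\<phi> t z) / sqrt t)) = ereal L"
    by (intro lim_imp_Limsup tendsto_ereal) simp_all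
  thus ?thesis by simp
qed

lemma extremal_rate_if_sqrt_asymptotics:
  assumes L: "L > 0"
    and lim: "\<And>z. z \<in> UHP \<Longrightarrow> ((\<lambda>t. \<phi> t z / of_real (sqrt t)) \<longlongrightarrow> \<i> * of_real L) at_top"
  shows "extremal_rate \<phi>"
  unfolding extremal_rate_def
proof (intro exI[of _ L] conjI ballI L)
  fix z assume "z \<in> UHP"
  hence "((\<lambda>t. cmod (\<phi> t z / of_real (sqrt t))) \<longlongrightarrow> cmod (\<i> * of_real L)) at_top"
    by (intro tendsto_norm lim)
  moreover have "eventually (\<lambda>t. cmod (\<phi> t z / of_real (sqrt t)) = cmod (\<phi> t z) / sqrt t) at_top"
    using eventually_gt_at_top[of 0] by eventually_elim (simp add: norm_divide)
  ultimately show "((\<lambda>t. cmod (\<phi> t z) / sqrt t) \<longlongrightarrow> L) at_top"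
    using L by (simp add: norm_mult Lim_transform_eventually)
qed

lemma eventually_le_sqrt_if_Limsup_finite:
  assumes "Limsup at_top (\<lambda>t. ereal (cmod (w t) / sqrt t)) < \<infinity>"
  obtains C where "C > 0" and "eventually (\<lambda>t. cmod (w t) \<le> C * sqrt t) at_top"
proof -
  obtain n :: nat where "Limsup at_top (\<lambda>t. ereal (cmod (w t) / sqrt t)) < ereal (real n)"
    using assms less_PInf_Ex_of_nat by auto
  hence "eventually (\<lambda>t. ereal (cmod (w t) / sqrt t) < ereal (real n)) at_top"
    by (rule Limsup_lessD)
  hence "eventually (\<lambda>t. cmod (w t) \<le> (real n + 1) * sqrt t) at_top"
    using eventually_gt_at_top[of 0]
  proof eventually_elim
    case (elim t)
    hence "cmod (w t) < real n * sqrt t" by (simp add: divide_less_eq)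
    also have "\<dots> \<le> (real n + 1) * sqrt t" using elim by (intro mult_right_mono) auto
    finally show ?case by simp
  qed
  thus thesis by (intro that[of "real n + 1"]) auto
qed

theorem theorem4p5:
  fixes \<phi> :: "real \<Rightarrow> complex \<Rightarrow> complex"
    and G :: "complex \<Rightarrow> complex"
    and \<alpha> \<beta> :: real
    and \<mu> :: "real measure"
  assumes sg: "semigroup_H \<phi>"
    and ne: "non_elliptic \<phi>"
    and dw: "DW_infinity \<phi>"
    and par: "parabolic_semigroup \<phi>"
    and zhs: "zero_hyperbolic_step \<phi>"
    and gen: "infinitesimal_generator \<phi> G"
    and alpha: "\<alpha> \<ge> 0"
    and mu_borel: "sets \<mu> = sets borel"
    and mu_fin: "finite_measure \<mu>"
    and herglotz: "\<forall>z\<in>UHP. G z = complex_of_real \<alpha> * z + complex_of_real \<beta>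
                     + (\<integral>s. (1 + complex_of_real s * z) / (complex_of_real s - z) \<partial>\<mu>)"
  shows "(extremal_rate \<phi> \<longleftrightarrow>
            (\<exists>z\<in>UHP. Limsup at_top (\<lambda>t. ereal (cmod (\<phi> t z) / sqrt t)) < \<infinity>))
       \<and> (extremal_rate \<phi> \<longleftrightarrow>
            (\<forall>z\<in>UHP. Limsup at_top (\<lambda>t. ereal (cmod (\<phi> t z) / sqrt t)) < \<infinity>))
       \<and> (extremal_rate \<phi> \<longleftrightarrow>
            (\<alpha> = 0 \<and> (\<integral>\<^sup>+ s. ennreal (s\<^sup>2) \<partial>\<mu>) < \<infinity> \<and> \<beta> = (\<integral>s. s \<partial>\<mu>)))
       \<and> (extremal_rate \<phi> \<longrightarrow>
            (\<forall>z\<in>UHP. ((\<lambda>t. \<phi> t z / complex_of_real (sqrt t)) \<longlongrightarrow>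
                 \<i> * complex_of_real (sqrt (2 * (\<integral>s. 1 + s\<^sup>2 \<partial>\<mu>)))) at_top))"
proof -
  have "herglotz_generator \<mu> \<alpha> \<beta> G"
    using mu_fin mu_borel alpha herglotz
    by (intro herglotz_generator.intro herglotz_generator_axioms.intro) (auto simp: UHP_def)
  note orbit = herglotz_orbit_of_semigroup[OF this sg dw gen]
  define moments where
    "moments \<longleftrightarrow> \<alpha> = 0 \<and> (\<integral>\<^sup>+ s. ennreal (s\<^sup>2) \<partial>\<mu>) < \<infinity> \<and> \<beta> = (\<integral>s. s \<partial>\<mu>)"
  define L where "L = sqrt (2 * (\<integral>s. 1 + s\<^sup>2 \<partial>\<mu>))"
  have asymptotics: "L > 0 \<and> ((\<lambda>t. \<phi> t z / of_real (sqrt t)) \<longlongrightarrow> \<i> * of_real L) at_top"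
    if moments "z \<in> UHP" for z
    using herglotz_orbit.moment_conditions_imp_sqrt_asymptotics[OF orbit[OF that(2)]] that(1)
    unfolding moments_def L_def by simp
  have moments if "z \<in> UHP" "Limsup at_top (\<lambda>t. ereal (cmod (\<phi> t z) / sqrt t)) < \<infinity>" for z
    using eventually_le_sqrt_if_Limsup_finite[OF that(2)]
      herglotz_orbit.sqrt_growth_imp_moment_conditions[OF orbit[OF that(1)]]
    unfolding moments_def by blast
  moreover have "\<i> \<in> UHP" by (simp add: UHP_def)
  moreover have "extremal_rate \<phi>" if moments
    using asymptotics[OF that] \<open>\<i> \<in> UHP\<close> by (intro extremal_rate_if_sqrt_asymptotics[of L]) auto
  ultimately show ?thesis
    unfolding moments_def[symmetric] L_def[symmetric]
    using extremal_rate_imp_Limsup_finite[of \<phi>] asymptotics by blast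
qed

end
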